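(* Let $P_n$ be a labeled path such that the number of left-upper corners of its ribbon diagram $RT(P_n)$ differs from the number of right-lower corners of $RT(P_n)$. Then $X(P_n;\mathbf{x},q)$ is not palindromic, and hence not symmetric.
   Context: A labeled path $P_n$ is the path graph with vertices $v_1,\dots,v_n$ (edges $v_iv_{i+1}$) where $v_i$ carries label $\sigma_i$ for a permutation $\sigma$ of $[n]$; vertices are identified with labels. A proper coloring is $c\colon[n]\to\{1,2,\dots\}$ with adjacent vertices colored differently; $\operatorname{asc}(c)=\#\{ij\in E: i<j,\ c(i)<c(j)\}$. The CQF is $X(P_n;\mathbf{x},q)=\sum_{c \text{ proper}} x_{c(1)}\cdots x_{c(n)}q^{\operatorname{asc}(c)}$. It is symmetric if each coefficient of $q^k$ is a symmetric function, and palindromic if the coefficient of $q^k$ equals that of $q^{(n-1)-k}$ for all $k$. The ad-pattern of $P_n$ is $w_1\cdots w_{n-1}$ with $w_i=a$ if $\sigma_i<\sigma_{i+1}$ and $w_i=d$ otherwise. The ribbon diagram $RT(P_n)$ consists of $n$ unit boxes placed in the plane: start with box $1$, and for $i=1,\dots,n-1$ place box $i+1$ immediately to the right of box $i$ if $w_i=a$ and immediately above box $i$ if $w_i=d$. A left-upper (LU) corner is a box with no box immediately to its left and no box immediately above it; a right-lower (RL) corner is a box with no box immediately to its right and no box immediately below it. *)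

theory Defs
  imports Main
begin

text \<open>A labeled path P_n is given by the list s = [sigma_1, ..., sigma_n] of labels,
  a permutation of [n]. Position i (0-based) is vertex v_(i+1); vertices are identified with labels.\<close>

definition labeled_path :: "nat list \<Rightarrow> bool" where
  "labeled_path s \<longleftrightarrow> distinct s \<and> set s = {1..length s}"

definition proper_col :: "nat list \<Rightarrow> (nat \<Rightarrow> nat) \<Rightarrow> bool" where
  "proper_col s c \<longleftrightarrow> (\<forall>i. Suc i < length s \<longrightarrow> c (s ! i) \<noteq> c (s ! Suc i))"

definition asc :: "nat list \<Rightarrow> (nat \<Rightarrow> nat) \<Rightarrow> nat" where
  "asc s c = card {i. Suc i < length s \<and>
      c (min (s ! i) (s ! Suc i)) < c (max (s ! i) (s ! Suc i))}"

text \<open>Coefficient of q^k x^alpha in X(P_n; x, q): colors are positive integers, variables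
  x_1, x_2, ...; a monomial is an exponent function alpha (alpha j = exponent of x_j).
  Colorings are taken extensional (value 0 outside the vertex set [n]).\<close>
definition cqf_coeff :: "nat list \<Rightarrow> nat \<Rightarrow> (nat \<Rightarrow> nat) \<Rightarrow> nat" where
  "cqf_coeff s k alpha = card {c. (\<forall>v. v \<notin> {1..length s} \<longrightarrow> c v = 0)
       \<and> (\<forall>v\<in>{1..length s}. 1 \<le> c v) \<and> proper_col s c \<and> asc s c = k
       \<and> (\<forall>j. card {v\<in>{1..length s}. c v = j} = alpha j)}"

definition cqf_palindromic :: "nat list \<Rightarrow> bool" where
  "cqf_palindromic s \<longleftrightarrow>
     (\<forall>k alpha. k \<le> length s - 1 \<longrightarrow>
        cqf_coeff s k alpha = cqf_coeff s (length s - 1 - k) alpha)"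

text \<open>Symmetric: each q^k coefficient is invariant under permutations of the variables
  x_1, x_2, ... (bijections of nat fixing 0, the unused index).\<close>
definition cqf_symmetric :: "nat list \<Rightarrow> bool" where
  "cqf_symmetric s \<longleftrightarrow>
     (\<forall>k alpha \<pi>. bij \<pi> \<and> \<pi> 0 = 0 \<longrightarrow> cqf_coeff s k (alpha \<circ> \<pi>) = cqf_coeff s k alpha)"

fun box_pos :: "nat list \<Rightarrow> nat \<Rightarrow> int \<times> int" where
  "box_pos s 0 = (0, 0)"
| "box_pos s (Suc i) = (let (x, y) = box_pos s i in
      if s ! i < s ! Suc i then (x + 1, y) else (x, y + 1))"

definition ribbon :: "nat list \<Rightarrow> (int \<times> int) set" where
  "ribbon s = box_pos s ` {..<length s}"

definition LU_corners :: "nat list \<Rightarrow> nat" where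
  "LU_corners s = card {(x, y) \<in> ribbon s. (x - 1, y) \<notin> ribbon s \<and> (x, y + 1) \<notin> ribbon s}"

definition RL_corners :: "nat list \<Rightarrow> nat" where
  "RL_corners s = card {(x, y) \<in> ribbon s. (x + 1, y) \<notin> ribbon s \<and> (x, y - 1) \<notin> ribbon s}"

end

theory Submission
  imports Defs "HOL-Combinatorics.Transposition"
begin

text \<open>Read along the path, a proper coloring with all n - 1 edges ascending is exactly a sequence
  that rises at the ascents of the labels and falls at their descents; a coloring without ascending
  edges follows the opposite pattern. The LU corners of the ribbon are the valleys of the ascent
  pattern and the RL corners its peaks. Suppose there are more valleys than peaks (otherwise
  exchange the roles of q^0 and q^(n-1)). Coloring each vertex by one plus the longest monotone run
  reaching it gives a coloring with n - 1 ascents whose color 1 occupies exactly the valleys; let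
  alpha be its type. A coloring without ascents puts its minimal color only on peaks, so none has
  type alpha, and the coefficients of q^(n-1) and q^0 differ at x^alpha. After swapping the colors 1
  and M (the largest color of alpha), a coloring with n - 1 ascents would have to carry its top
  color M on as many vertices as there are valleys, but it can only use it on peaks; hence the
  coefficient of q^(n-1) is not symmetric either.\<close>

definition ascent :: "nat list \<Rightarrow> nat \<Rightarrow> bool" where
  "ascent s i \<longleftrightarrow> s ! i < s ! Suc i"

text \<open>The local minima among positions 0, ..., n - 1 of any sequence that rises from i to i + 1
  exactly when up i holds.\<close>
definition valleys :: "nat \<Rightarrow> (nat \<Rightarrow> bool) \<Rightarrow> nat set" where
  "valleys n up = {i. i < n \<and> (i = 0 \<or> \<not> up (i - 1)) \<and> (Suc i = n \<or> up i)}"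

abbreviation peaks :: "nat \<Rightarrow> (nat \<Rightarrow> bool) \<Rightarrow> nat set" where
  "peaks n up \<equiv> valleys n (\<lambda>i. \<not> up i)"

lemma box_pos_Suc:
  "box_pos s (Suc i) =
     (if ascent s i then (fst (box_pos s i) + 1, snd (box_pos s i))
      else (fst (box_pos s i), snd (box_pos s i) + 1))"
  by (simp add: ascent_def split: prod.splits)

declare box_pos.simps(2) [simp del]

lemma box_pos_diagonal: "fst (box_pos s i) + snd (box_pos s i) = int i"
  by (induction i) (auto simp: box_pos_Suc)

lemma box_pos_eq_iff: "box_pos s i = box_pos s j \<longleftrightarrow> i = j"
  by (metis box_pos_diagonal of_nat_eq_iff)

lemma mem_ribbon_diagonal:
  "q \<in> ribbon s \<and> fst q + snd q = int j \<longleftrightarrow> j < length s \<and> box_pos s j = q"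
  unfolding ribbon_def by (auto simp: box_pos_diagonal)

lemma right_mem_ribbon_iff:
  assumes "box_pos s i = (x, y)"
  shows "(x + 1, y) \<in> ribbon s \<longleftrightarrow> Suc i < length s \<and> ascent s i"
  using mem_ribbon_diagonal[of "(x + 1, y)" s "Suc i"] box_pos_diagonal[of s i] assms
  by (auto simp: box_pos_Suc)

lemma upper_mem_ribbon_iff:
  assumes "box_pos s i = (x, y)"
  shows "(x, y + 1) \<in> ribbon s \<longleftrightarrow> Suc i < length s \<and> \<not> ascent s i"
  using mem_ribbon_diagonal[of "(x, y + 1)" s "Suc i"] box_pos_diagonal[of s i] assms
  by (auto simp: box_pos_Suc)

lemma mem_ribbon_prev_diagonal:
  assumes "i < length s" "fst q + snd q = int i - 1"
  shows "q \<in> ribbon s \<longleftrightarrow> i \<noteq> 0 \<and> box_pos s (i - 1) = q"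
  using assms mem_ribbon_diagonal[of q s "i - 1"] box_pos_diagonal[of s]
  by (cases i) (auto simp: ribbon_def)

lemma left_mem_ribbon_iff:
  assumes "i < length s" "box_pos s i = (x, y)"
  shows "(x - 1, y) \<in> ribbon s \<longleftrightarrow> i \<noteq> 0 \<and> ascent s (i - 1)"
  using mem_ribbon_prev_diagonal[OF assms(1), of "(x - 1, y)"] box_pos_diagonal[of s i] assms(2)
  by (cases i) (auto simp: box_pos_Suc prod_eq_iff split: if_splits)

lemma lower_mem_ribbon_iff:
  assumes "i < length s" "box_pos s i = (x, y)"
  shows "(x, y - 1) \<in> ribbon s \<longleftrightarrow> i \<noteq> 0 \<and> \<not> ascent s (i - 1)"
  using mem_ribbon_prev_diagonal[OF assms(1), of "(x, y - 1)"] box_pos_diagonal[of s i] assms(2)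
  by (cases i) (auto simp: box_pos_Suc prod_eq_iff split: if_splits)

lemma card_ribbon_filter:
  "card {(x, y) \<in> ribbon s. P x y} = card {i. i < length s \<and> case_prod P (box_pos s i)}"
proof -
  have "{(x, y) \<in> ribbon s. P x y} = box_pos s ` {i. i < length s \<and> case_prod P (box_pos s i)}"
    by (auto simp: ribbon_def)
  moreover have "inj (box_pos s)"
    by (auto intro: injI simp: box_pos_eq_iff)
  ultimately show ?thesis
    by (simp add: card_image inj_on_subset)
qed

lemma LU_corners_eq_card_valleys: "LU_corners s = card (valleys (length s) (ascent s))"
proof -
  have corner_iff: "i \<in> valleys (length s) (ascent s) \<longleftrightarrow> i < length s \<and>
      (case box_pos s i of (x, y) \<Rightarrow> (x - 1, y) \<notin> ribbon s \<and> (x, y + 1) \<notin> ribbon s)" for i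
  proof (cases "i < length s")
    case True
    obtain x y where xy: "box_pos s i = (x, y)" by fastforce
    show ?thesis
      using left_mem_ribbon_iff[OF True xy] upper_mem_ribbon_iff[OF xy] xy True
      by (cases "Suc i < length s") (auto simp: valleys_def)
  qed (simp add: valleys_def)
  show ?thesis
    unfolding LU_corners_def card_ribbon_filter
    by (intro arg_cong[where f = card] set_eqI) (simp only: corner_iff mem_Collect_eq)
qed

lemma RL_corners_eq_card_peaks: "RL_corners s = card (peaks (length s) (ascent s))"
proof -
  have corner_iff: "i \<in> peaks (length s) (ascent s) \<longleftrightarrow> i < length s \<and>
      (case box_pos s i of (x, y) \<Rightarrow> (x + 1, y) \<notin> ribbon s \<and> (x, y - 1) \<notin> ribbon s)" for i
  proof (cases "i < length s")
    case True
    obtain x y where xy: "box_pos s i = (x, y)" by fastforce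
    show ?thesis
      using lower_mem_ribbon_iff[OF True xy] right_mem_ribbon_iff[OF xy] xy True
      by (cases "Suc i < length s") (auto simp: valleys_def)
  qed (simp add: valleys_def)
  show ?thesis
    unfolding RL_corners_def card_ribbon_filter
    by (intro arg_cong[where f = card] set_eqI) (simp only: corner_iff mem_Collect_eq)
qed

definition follows_pattern :: "nat \<Rightarrow> (nat \<Rightarrow> bool) \<Rightarrow> (nat \<Rightarrow> 'a::linorder) \<Rightarrow> bool" where
  "follows_pattern n up d \<longleftrightarrow>
     (\<forall>i. Suc i < n \<longrightarrow> (if up i then d i < d (Suc i) else d (Suc i) < d i))"

lemma follows_pattern_iff:
  "follows_pattern n up d \<longleftrightarrow>
     (\<forall>i. Suc i < n \<longrightarrow> d i \<noteq> d (Suc i) \<and> (d i < d (Suc i) \<longleftrightarrow> up i))"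
  unfolding follows_pattern_def by (metis less_asym' linorder_neqE)

lemma follows_pattern_cong:
  "(\<And>i. i < n \<Longrightarrow> d i = d' i) \<Longrightarrow> follows_pattern n up d \<longleftrightarrow> follows_pattern n up d'"
  unfolding follows_pattern_def by simp

lemma valleys_subset: "valleys n up \<subseteq> {..<n}"
  by (auto simp: valleys_def)

lemma finite_valleys [simp]: "finite (valleys n up)"
  using valleys_subset finite_subset by blast

lemma follows_pattern_minimum_in_valleys:
  assumes d: "follows_pattern n up d" and "i < n" and min: "\<And>j. j < n \<Longrightarrow> d i \<le> d j"
  shows "i \<in> valleys n up"
proof -
  have "\<not> up j" if "i = Suc j" for j
    using d min[of j] that \<open>i < n\<close> by (force simp: follows_pattern_def dest!: spec[of _ j])
  moreover have "up i" if "Suc i < n"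
  proof (rule ccontr)
    assume "\<not> up i"
    then have "d (Suc i) < d i" using d that by (simp add: follows_pattern_def)
    then show False using min[of "Suc i"] that by simp
  qed
  moreover have "Suc i < n \<or> Suc i = n"
    using \<open>i < n\<close> by linarith
  ultimately show ?thesis
    using \<open>i < n\<close> by (cases i) (auto simp: valleys_def)
qed

lemma follows_pattern_maximum_in_peaks:
  assumes d: "follows_pattern n up d" and "i < n" and max: "\<And>j. j < n \<Longrightarrow> d j \<le> d i"
  shows "i \<in> peaks n up"
proof -
  have "up j" if "i = Suc j" for j
  proof (rule ccontr)
    assume "\<not> up j"
    then have "d i < d j" using d that \<open>i < n\<close> by (simp add: follows_pattern_def)
    then show False using max[of j] that \<open>i < n\<close> by simp
  qed
  moreover have "\<not> up i" if "Suc i < n"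
    using d max[of "Suc i"] that by (force simp: follows_pattern_def dest!: spec[of _ i])
  moreover have "Suc i < n \<or> Suc i = n"
    using \<open>i < n\<close> by linarith
  ultimately show ?thesis
    using \<open>i < n\<close> by (cases i) (auto simp: valleys_def)
qed

fun ascent_run :: "(nat \<Rightarrow> bool) \<Rightarrow> nat \<Rightarrow> nat" where
  "ascent_run up 0 = 0"
| "ascent_run up (Suc i) = (if up i then Suc (ascent_run up i) else 0)"

function descent_run :: "nat \<Rightarrow> (nat \<Rightarrow> bool) \<Rightarrow> nat \<Rightarrow> nat" where
  "descent_run n up i = (if Suc i < n \<and> \<not> up i then Suc (descent_run n up (Suc i)) else 0)"
  by auto
termination by (relation "measure (\<lambda>(n, up, i). n - i)") auto

declare descent_run.simps [simp del]

text \<open>One more than the longer of the two monotone runs ending at i (rising from the left, falling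
  from the right): the pointwise least positive sequence with the pattern, equal to 1 exactly at
  the valleys.\<close>
definition pattern_seq :: "nat \<Rightarrow> (nat \<Rightarrow> bool) \<Rightarrow> nat \<Rightarrow> nat" where
  "pattern_seq n up i = Suc (max (ascent_run up i) (descent_run n up i))"

lemma follows_pattern_pattern_seq: "follows_pattern n up (pattern_seq n up)"
  unfolding follows_pattern_def
proof (intro allI impI)
  fix i assume "Suc i < n"
  then show "if up i then pattern_seq n up i < pattern_seq n up (Suc i)
             else pattern_seq n up (Suc i) < pattern_seq n up i"
    by (auto simp: pattern_seq_def descent_run.simps[of n up i])
qed

lemma pattern_seq_eq_1_iff:
  assumes "i < n"
  shows "pattern_seq n up i = 1 \<longleftrightarrow> i \<in> valleys n up"
proof -
  have "descent_run n up i = 0 \<longleftrightarrow> Suc i = n \<or> up i"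
    using assms by (subst descent_run.simps) auto
  moreover have "ascent_run up i = 0 \<longleftrightarrow> i = 0 \<or> \<not> up (i - 1)"
    by (cases i) auto
  ultimately show ?thesis
    using assms by (simp add: pattern_seq_def valleys_def)
qed

lemma asc_eq_max_iff:
  "asc s c = length s - 1 \<longleftrightarrow>
     (\<forall>i. Suc i < length s \<longrightarrow> c (min (s ! i) (s ! Suc i)) < c (max (s ! i) (s ! Suc i)))"
proof -
  let ?E = "{i. Suc i < length s \<and> c (min (s ! i) (s ! Suc i)) < c (max (s ! i) (s ! Suc i))}"
  have sub: "?E \<subseteq> {..<length s - 1}"
    by auto
  have "asc s c = length s - 1 \<longleftrightarrow> ?E = {..<length s - 1}"
  proof
    assume "asc s c = length s - 1"
    then show "?E = {..<length s - 1}"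
      unfolding asc_def using card_subset_eq[OF finite_lessThan sub] by simp
  qed (simp add: asc_def)
  also have "\<dots> \<longleftrightarrow>
      (\<forall>i. Suc i < length s \<longrightarrow> c (min (s ! i) (s ! Suc i)) < c (max (s ! i) (s ! Suc i)))"
    by (auto simp: set_eq_iff less_diff_conv)
  finally show ?thesis .
qed

lemma asc_eq_0_iff:
  "asc s c = 0 \<longleftrightarrow>
     (\<forall>i. Suc i < length s \<longrightarrow> \<not> c (min (s ! i) (s ! Suc i)) < c (max (s ! i) (s ! Suc i)))"
proof -
  have "finite {i. Suc i < length s \<and> c (min (s ! i) (s ! Suc i)) < c (max (s ! i) (s ! Suc i))}"
    by (rule finite_subset[of _ "{..<length s}"]) auto
  then show ?thesis
    unfolding asc_def by auto
qed

lemma edge_ascent_iff: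
  fixes c :: "nat \<Rightarrow> nat"
  assumes "labeled_path s" "Suc i < length s" "c (s ! i) \<noteq> c (s ! Suc i)"
  shows "c (min (s ! i) (s ! Suc i)) < c (max (s ! i) (s ! Suc i))
           \<longleftrightarrow> (c (s ! i) < c (s ! Suc i) \<longleftrightarrow> ascent s i)"
proof -
  have "s ! i \<noteq> s ! Suc i"
    using assms(1,2) nth_eq_iff_index_eq[of s i "Suc i"] by (simp add: labeled_path_def)
  then show ?thesis
    using assms(3) by (cases "s ! i < s ! Suc i") (auto simp: ascent_def min_def max_def)
qed

lemma proper_col_asc_max_iff:
  assumes "labeled_path s"
  shows "proper_col s c \<and> asc s c = length s - 1
           \<longleftrightarrow> follows_pattern (length s) (ascent s) (\<lambda>i. c (s ! i))"
proof -
  have "c (s ! i) \<noteq> c (s ! Suc i) \<and> c (min (s ! i) (s ! Suc i)) < c (max (s ! i) (s ! Suc i))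
    \<longleftrightarrow> c (s ! i) \<noteq> c (s ! Suc i) \<and> (c (s ! i) < c (s ! Suc i) \<longleftrightarrow> ascent s i)"
    if "Suc i < length s" for i
    using edge_ascent_iff[OF assms that] by blast
  then show ?thesis
    unfolding follows_pattern_iff proper_col_def asc_eq_max_iff all_conj_distrib[symmetric]
      imp_conjR[symmetric] by (intro all_cong imp_cong) simp_all
qed

lemma proper_col_asc_0_iff:
  assumes "labeled_path s"
  shows "proper_col s c \<and> asc s c = 0
           \<longleftrightarrow> follows_pattern (length s) (\<lambda>i. \<not> ascent s i) (\<lambda>i. c (s ! i))"
proof -
  have "c (s ! i) \<noteq> c (s ! Suc i) \<and> \<not> c (min (s ! i) (s ! Suc i)) < c (max (s ! i) (s ! Suc i))
    \<longleftrightarrow> c (s ! i) \<noteq> c (s ! Suc i) \<and> (c (s ! i) < c (s ! Suc i) \<longleftrightarrow> \<not> ascent s i)"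
    if "Suc i < length s" for i
    using edge_ascent_iff[OF assms that] by blast
  then show ?thesis
    unfolding follows_pattern_iff proper_col_def asc_eq_0_iff all_conj_distrib[symmetric]
      imp_conjR[symmetric] by (intro all_cong imp_cong) simp_all
qed

definition cqf_colorings :: "nat list \<Rightarrow> nat \<Rightarrow> (nat \<Rightarrow> nat) \<Rightarrow> (nat \<Rightarrow> nat) set" where
  "cqf_colorings s k \<alpha> = {c. (\<forall>v. v \<notin> {1..length s} \<longrightarrow> c v = 0)
       \<and> (\<forall>v\<in>{1..length s}. 1 \<le> c v) \<and> proper_col s c \<and> asc s c = k
       \<and> (\<forall>j. card {v\<in>{1..length s}. c v = j} = \<alpha> j)}"

lemma cqf_coeff_eq_card: "cqf_coeff s k \<alpha> = card (cqf_colorings s k \<alpha>)"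
  unfolding cqf_coeff_def cqf_colorings_def ..

lemma cqf_colorings_color_used:
  assumes "c \<in> cqf_colorings s k \<alpha>" "v \<in> {1..length s}"
  shows "0 < \<alpha> (c v)"
proof -
  have "card {u\<in>{1..length s}. c u = c v} = \<alpha> (c v)"
    using assms(1) by (simp add: cqf_colorings_def)
  moreover have "v \<in> {u\<in>{1..length s}. c u = c v}"
    using assms(2) by simp
  then have "0 < card {u\<in>{1..length s}. c u = c v}"
    by (subst card_gt_0_iff) auto
  ultimately show ?thesis
    by simp
qed

lemma finite_cqf_colorings:
  assumes "\<And>j. M < j \<Longrightarrow> \<alpha> j = 0"
  shows "finite (cqf_colorings s k \<alpha>)"
proof (rule finite_subset)
  let ?F = "{c. \<forall>v. (v \<in> {1..length s} \<longrightarrow> c v \<in> {..M}) \<and> (v \<notin> {1..length s} \<longrightarrow> c v = 0)}"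
  show "cqf_colorings s k \<alpha> \<subseteq> ?F"
  proof (intro subsetI CollectI allI conjI impI)
    fix c v assume c: "c \<in> cqf_colorings s k \<alpha>"
    show "c v \<in> {..M}" if "v \<in> {1..length s}"
      using cqf_colorings_color_used[OF c that] assms[of "c v"] by (auto simp: not_less[symmetric])
    show "c v = 0" if "v \<notin> {1..length s}"
      using c that by (simp add: cqf_colorings_def)
  qed
  show "finite ?F"
    by (rule finite_set_of_finite_funs) simp_all
qed

lemma card_color_class_along_path:
  assumes "labeled_path s"
  shows "card {v \<in> {1..length s}. c v = j} = card {i. i < length s \<and> c (s ! i) = j}"
proof -
  have "{v \<in> {1..length s}. c v = j} = {v \<in> set s. c v = j}"
    using assms by (simp add: labeled_path_def)
  also have "\<dots> = (!) s ` {i. i < length s \<and> c (s ! i) = j}"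
    by (auto simp: in_set_conv_nth)
  finally have "{v \<in> {1..length s}. c v = j} = (!) s ` {i. i < length s \<and> c (s ! i) = j}" .
  moreover have "inj_on ((!) s) {i. i < length s \<and> c (s ! i) = j}"
    using assms by (auto simp: labeled_path_def intro!: inj_on_nth)
  ultimately show ?thesis
    by (simp add: card_image)
qed

lemma exists_coloring_along_path:
  assumes "labeled_path s"
  obtains c where "\<And>v. v \<notin> {1..length s} \<Longrightarrow> c v = 0"
    and "\<And>i. i < length s \<Longrightarrow> c (s ! i) = d i"
proof
  let ?c = "\<lambda>v. if v \<in> {1..length s} then d (inv_into {..<length s} ((!) s) v) else 0"
  have "inj_on ((!) s) {..<length s}"
    using assms by (auto simp: labeled_path_def intro!: inj_on_nth)
  moreover have "s ! i \<in> {1..length s}" if "i < length s" for i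
    using assms that by (metis labeled_path_def nth_mem)
  ultimately show "?c (s ! i) = d i" if "i < length s" for i
    using that by (simp add: inv_into_f_f)
qed auto

lemma card_color_class_of_cqf_coloring:
  assumes "labeled_path s" "c \<in> cqf_colorings s k \<alpha>"
  shows "card {i. i < length s \<and> c (s ! i) = j} = \<alpha> j"
proof -
  have "card {v \<in> {1..length s}. c v = j} = \<alpha> j"
    using assms(2) unfolding cqf_colorings_def by blast
  then show ?thesis
    by (simp only: card_color_class_along_path[OF assms(1)])
qed

lemma cqf_colorings_empty_if_few_valleys:
  assumes s: "labeled_path s"
    and pattern: "\<And>c. proper_col s c \<and> asc s c = k \<Longrightarrow> follows_pattern (length s) up (\<lambda>i. c (s ! i))"
    and few: "card (valleys (length s) up) < \<alpha> 1"
  shows "cqf_colorings s k \<alpha> = {}"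
proof (rule ccontr)
  assume "cqf_colorings s k \<alpha> \<noteq> {}"
  then obtain c where c: "c \<in> cqf_colorings s k \<alpha>" by blast
  have pos: "1 \<le> c (s ! i)" if "i < length s" for i
    using c s that by (auto simp: cqf_colorings_def labeled_path_def)
  have c_pattern: "follows_pattern (length s) up (\<lambda>i. c (s ! i))"
    using c by (intro pattern) (simp add: cqf_colorings_def)
  have "{i. i < length s \<and> c (s ! i) = 1} \<subseteq> valleys (length s) up"
    using pos by (auto intro: follows_pattern_minimum_in_valleys[OF c_pattern])
  then have "\<alpha> 1 \<le> card (valleys (length s) up)"
    using card_color_class_of_cqf_coloring[OF s c, of 1] by (metis card_mono finite_valleys)
  then show False
    using few by simp
qed

lemma cqf_colorings_empty_if_few_peaks:
  assumes s: "labeled_path s"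
    and pattern: "\<And>c. proper_col s c \<and> asc s c = k \<Longrightarrow> follows_pattern (length s) up (\<lambda>i. c (s ! i))"
    and bounded: "\<And>j. M < j \<Longrightarrow> \<alpha> j = 0"
    and few: "card (peaks (length s) up) < \<alpha> M"
  shows "cqf_colorings s k \<alpha> = {}"
proof (rule ccontr)
  assume "cqf_colorings s k \<alpha> \<noteq> {}"
  then obtain c where c: "c \<in> cqf_colorings s k \<alpha>" by blast
  have le_M: "c (s ! i) \<le> M" if "i < length s" for i
  proof -
    have "s ! i \<in> {1..length s}"
      using s that by (metis labeled_path_def nth_mem)
    then show ?thesis
      using cqf_colorings_color_used[OF c] bounded by (metis not_le less_numeral_extra(3))
  qed
  have c_pattern: "follows_pattern (length s) up (\<lambda>i. c (s ! i))"
    using c by (intro pattern) (simp add: cqf_colorings_def)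
  have "{i. i < length s \<and> c (s ! i) = M} \<subseteq> peaks (length s) up"
    using le_M by (auto intro: follows_pattern_maximum_in_peaks[OF c_pattern])
  then have "\<alpha> M \<le> card (peaks (length s) up)"
    using card_color_class_of_cqf_coloring[OF s c, of M] by (metis card_mono finite_valleys)
  then show False
    using few by simp
qed

lemma cqf_coeff_pos_for_valley_type:
  assumes s: "labeled_path s" and "0 < length s"
    and K: "\<And>c. follows_pattern (length s) up (\<lambda>i. c (s ! i)) \<Longrightarrow> proper_col s c \<and> asc s c = K"
  obtains \<alpha> M where "0 < cqf_coeff s K \<alpha>" "1 \<le> M" "\<And>j. M < j \<Longrightarrow> \<alpha> j = 0"
    and "\<alpha> 1 = card (valleys (length s) up)"
proof -
  let ?n = "length s" and ?d = "pattern_seq (length s) up"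
  obtain c where c_out: "\<And>v. v \<notin> {1..?n} \<Longrightarrow> c v = 0"
    and c_path: "\<And>i. i < ?n \<Longrightarrow> c (s ! i) = ?d i"
    using exists_coloring_along_path[OF s, of ?d] by blast
  define \<alpha> where "\<alpha> j = card {v \<in> {1..?n}. c v = j}" for j
  have \<alpha>_path: "\<alpha> j = card {i. i < ?n \<and> ?d i = j}" for j
    unfolding \<alpha>_def card_color_class_along_path[OF s] using c_path by (metis (lifting))
  define M where "M = Max (?d ` {..<?n})"
  have d_le_M: "?d i \<le> M" if "i < ?n" for i
    unfolding M_def using that by (intro Max_ge) auto
  have "1 \<le> M"
    using d_le_M[OF \<open>0 < ?n\<close>] by (simp add: pattern_seq_def)
  have \<alpha>_bounded: "\<alpha> j = 0" if "M < j" for j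
  proof -
    have "?d i \<noteq> j" if "i < ?n" for i
      using d_le_M[OF that] \<open>M < j\<close> by simp
    then show ?thesis
      by (simp add: \<alpha>_path)
  qed
  have "{i. i < ?n \<and> ?d i = 1} = valleys ?n up"
    using pattern_seq_eq_1_iff[of _ ?n up] valleys_subset by blast
  then have \<alpha>_1: "\<alpha> 1 = card (valleys ?n up)"
    by (simp add: \<alpha>_path)
  have "follows_pattern ?n up (\<lambda>i. c (s ! i))"
    using follows_pattern_cong[of ?n "\<lambda>i. c (s ! i)" ?d up] c_path follows_pattern_pattern_seq
    by simp
  moreover have "1 \<le> c v" if "v \<in> {1..?n}" for v
  proof -
    have "v \<in> set s"
      using that s by (simp add: labeled_path_def)
    then obtain i where "i < ?n" "v = s ! i"
      by (auto simp: in_set_conv_nth)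
    then show ?thesis
      by (simp add: c_path pattern_seq_def)
  qed
  ultimately have "c \<in> cqf_colorings s K \<alpha>"
    using K[of c] c_out by (simp add: cqf_colorings_def \<alpha>_def)
  then have "0 < cqf_coeff s K \<alpha>"
    using finite_cqf_colorings[OF \<alpha>_bounded] by (auto simp: cqf_coeff_eq_card card_gt_0_iff)
  then show thesis
    using that \<open>1 \<le> M\<close> \<alpha>_bounded \<alpha>_1 by blast
qed

lemma cqf_coeffs_separated:
  assumes s: "labeled_path s"
    and K: "\<And>c. proper_col s c \<and> asc s c = K \<longleftrightarrow> follows_pattern (length s) up (\<lambda>i. c (s ! i))"
    and K': "\<And>c. proper_col s c \<and> asc s c = K' \<longleftrightarrow>
               follows_pattern (length s) (\<lambda>i. \<not> up i) (\<lambda>i. c (s ! i))"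
    and fewer_peaks: "card (peaks (length s) up) < card (valleys (length s) up)"
  obtains \<alpha> \<pi> where "0 < cqf_coeff s K \<alpha>" "cqf_coeff s K' \<alpha> = 0"
    and "bij \<pi>" "\<pi> 0 = 0" "cqf_coeff s K (\<alpha> \<circ> \<pi>) = 0"
proof -
  have "0 < length s"
    using fewer_peaks by (auto simp: valleys_def)
  then obtain \<alpha> M where pos: "0 < cqf_coeff s K \<alpha>" and "1 \<le> M"
    and \<alpha>_bounded: "\<And>j. M < j \<Longrightarrow> \<alpha> j = 0" and \<alpha>_1: "\<alpha> 1 = card (valleys (length s) up)"
    using cqf_coeff_pos_for_valley_type[OF s _ K[THEN iffD2]] by blast
  have "cqf_colorings s K' \<alpha> = {}"
    using cqf_colorings_empty_if_few_valleys[OF s K'[THEN iffD1]] fewer_peaks \<alpha>_1 by simp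
  moreover have "(\<alpha> \<circ> transpose 1 M) j = 0" if "M < j" for j
    using that \<open>1 \<le> M\<close> \<alpha>_bounded by simp
  then have "cqf_colorings s K (\<alpha> \<circ> transpose 1 M) = {}"
    using cqf_colorings_empty_if_few_peaks[where \<alpha> = "\<alpha> \<circ> transpose 1 M" and M = M,
        OF s K[THEN iffD1]] fewer_peaks \<alpha>_1
    by simp
  moreover have "transpose 1 M 0 = 0"
    using \<open>1 \<le> M\<close> by simp
  ultimately show thesis
    using that[OF pos _ bij_transpose] by (simp add: cqf_coeff_eq_card)
qed

theorem proposition4p2:
  fixes s :: "nat list"
  assumes "labeled_path s"
    and "LU_corners s \<noteq> RL_corners s"
  shows "\<not> cqf_palindromic s \<and> \<not> cqf_symmetric s"
proof -
  let ?n = "length s"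
  have valleys_differ: "card (valleys ?n (ascent s)) \<noteq> card (peaks ?n (ascent s))"
    using assms(2) by (simp add: LU_corners_eq_card_valleys RL_corners_eq_card_peaks)
  obtain K up where K_le: "K \<le> ?n - 1"
    and K: "\<And>c. proper_col s c \<and> asc s c = K \<longleftrightarrow> follows_pattern ?n up (\<lambda>i. c (s ! i))"
    and K': "\<And>c. proper_col s c \<and> asc s c = ?n - 1 - K \<longleftrightarrow>
           follows_pattern ?n (\<lambda>i. \<not> up i) (\<lambda>i. c (s ! i))"
    and fewer_peaks: "card (peaks ?n up) < card (valleys ?n up)"
  proof (cases "card (peaks ?n (ascent s)) < card (valleys ?n (ascent s))")
    case True
    then show thesis
      using that[of "?n - 1" "ascent s"]
        proper_col_asc_max_iff[OF assms(1)] proper_col_asc_0_iff[OF assms(1)] by simp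
  next
    case False
    then show thesis
      using that[of 0 "\<lambda>i. \<not> ascent s i"] valleys_differ
        proper_col_asc_max_iff[OF assms(1)] proper_col_asc_0_iff[OF assms(1)] by simp
  qed
  obtain \<alpha> \<pi> where "0 < cqf_coeff s K \<alpha>" "cqf_coeff s (?n - 1 - K) \<alpha> = 0"
    and "bij \<pi>" "\<pi> 0 = 0" "cqf_coeff s K (\<alpha> \<circ> \<pi>) = 0"
    by (rule cqf_coeffs_separated[OF assms(1) K K' fewer_peaks])
  then show ?thesis
    unfolding cqf_palindromic_def cqf_symmetric_def using K_le by (metis less_irrefl)
qed

end
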